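(* Let $S$ be an inverse monoid and $(X,E(S),p)$ a (global) presheaf of geodesic metric spaces on which $S$ acts properly and coboundedly, and fix $x_1\in X_1$. For $R\ge0$ let $d^R$ be the path metric on $S$ of the simplicial graph $S^R$ with vertex set $S$ in which distinct $s,t$ are adjacent iff $d(x_1\cdot s,x_1\cdot t)\le R$ (edges of length $1$; $d^R(s,t)=\infty$ if no path exists). Then there exists $T\ge0$ such that for every $R\ge T$ the extended metric space $(S,d^R)$ is quasi-isometric to $(X,d)$.
   Context: An inverse monoid is a monoid $S$ (identity $1$) in which every $s$ has a unique $s^{-1}$ with $ss^{-1}s=s$, $s^{-1}ss^{-1}=s^{-1}$; $E(S)$ is its set of idempotents, a meet-semilattice with meet $ef$. Presheaf: a set $X$ with maps $p\colon X\to E(S)$ and $X\times E(S)\to X$ such that $(x\cdot e)\cdot f=x\cdot ef$, $x\cdot p(x)=x$, $p(x\cdot e)=p(x)e$; fibers $X_e=p^{-1}(e)$. A (global) presheaf of metric spaces additionally has $p$ surjective, each $X_e$ a metric space $d_e$, and $d_e(x,y)\ge d_{ef}(x\cdot f,y\cdot f)$ for $x,y\in X_e$; $d(x,y)=d_e(x,y)$ for $x,y\in X_e$ and $\infty$ across fibers. Geodesic: finite distances $D$ are realised by isometric embeddings of $[0,D]$. Action: a right action $X\times S\to X$ extending the presheaf map on $E(S)$, with $p(x\cdot s)=s^{-1}p(x)s$ and $d_e(x,y)\ge d_{s^{-1}es}(x\cdot s,y\cdot s)$ for $x,y\in X_e$. Proper: for every $y_1\in X_1$ and $R\ge0$ there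 is a finite $\mathcal C\subseteq S$ with $\{s: d(y_1\cdot s,y_1\cdot s^{-1}s)\le R\}\subseteq\{ce: c\in\mathcal C,e\in E(S)\}$. Cobounded: there are $x_1'\in X_1$, $T_0\ge0$ such that every point of $X$ equals $y\cdot s$ for some $s\in S$ and $y$ with $d(x_1',y)\le T_0$. A map $f$ between extended metric spaces $(A,d_A),(B,d_B)$ is a quasi-isometry if there are $L\ge1$, $C\ge0$ with $d_A(a,a')<\infty$ iff $d_B(f(a),f(a'))<\infty$, $\frac1L d_A(a,a')-C\le d_B(f(a),f(a'))\le Ld_A(a,a')+C$ when finite, and every point of $B$ within distance $C$ of $f(A)$; spaces are quasi-isometric if such a map exists. *)

theory Defs
  imports Complex_Main "HOL-Library.Extended_Real"
begin

text \<open>The inverse monoid S is the whole type 's (a monoid via the class monoid_mult: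
  multiplication and identity 1).\<close>

definition inverse_monoid :: "'s::monoid_mult itself \<Rightarrow> bool" where
  "inverse_monoid _ \<longleftrightarrow> (\<forall>s::'s. \<exists>!t. s * t * s = s \<and> t * s * t = t)"

definition minv :: "'s::monoid_mult \<Rightarrow> 's" where
  "minv s = (THE t. s * t * s = s \<and> t * s * t = t)"

definition idem :: "'s::monoid_mult set" where
  "idem = {e. e * e = e}"

text \<open>X is the whole type 'x, p the projection, rs the map X x E(S) -> X,
  d the distance on fibres (its values across fibres are irrelevant).\<close>

definition presheaf :: "('x \<Rightarrow> 's::monoid_mult) \<Rightarrow> ('x \<Rightarrow> 's \<Rightarrow> 'x) \<Rightarrow> bool" where
  "presheaf p rs \<longleftrightarrow>
     (\<forall>x. p x \<in> idem) \<and>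
     (\<forall>x. \<forall>e\<in>idem. \<forall>f\<in>idem. rs (rs x e) f = rs x (e * f)) \<and>
     (\<forall>x. rs x (p x) = x) \<and>
     (\<forall>x. \<forall>e\<in>idem. p (rs x e) = p x * e)"

definition edist :: "('x \<Rightarrow> 's) \<Rightarrow> ('x \<Rightarrow> 'x \<Rightarrow> real) \<Rightarrow> 'x \<Rightarrow> 'x \<Rightarrow> ereal" where
  "edist p d x y = (if p x = p y then ereal (d x y) else \<infinity>)"

definition global_presheaf_metric ::
  "('x \<Rightarrow> 's::monoid_mult) \<Rightarrow> ('x \<Rightarrow> 's \<Rightarrow> 'x) \<Rightarrow> ('x \<Rightarrow> 'x \<Rightarrow> real) \<Rightarrow> bool" where
  "global_presheaf_metric p rs d \<longleftrightarrow>
     presheaf p rs \<and> range p = idem \<and>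
     (\<forall>x y. p x = p y \<longrightarrow> d x y = 0 \<longleftrightarrow> x = y) \<and>
     (\<forall>x y. p x = p y \<longrightarrow> d x y = d y x) \<and>
     (\<forall>x y z. p x = p y \<longrightarrow> p y = p z \<longrightarrow> d x z \<le> d x y + d y z) \<and>
     (\<forall>x y. \<forall>f\<in>idem. p x = p y \<longrightarrow> d (rs x f) (rs y f) \<le> d x y)"

definition geodesic_fibres :: "('x \<Rightarrow> 's) \<Rightarrow> ('x \<Rightarrow> 'x \<Rightarrow> real) \<Rightarrow> bool" where
  "geodesic_fibres p d \<longleftrightarrow>
     (\<forall>x y. p x = p y \<longrightarrow>
        (\<exists>\<gamma>::real \<Rightarrow> 'x. \<gamma> 0 = x \<and> \<gamma> (d x y) = y \<and>
           (\<forall>t\<in>{0..d x y}. p (\<gamma> t) = p x) \<and>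
           (\<forall>s\<in>{0..d x y}. \<forall>t\<in>{0..d x y}. d (\<gamma> s) (\<gamma> t) = \<bar>s - t\<bar>)))"

definition is_action ::
  "('x \<Rightarrow> 's::monoid_mult) \<Rightarrow> ('x \<Rightarrow> 's \<Rightarrow> 'x) \<Rightarrow> ('x \<Rightarrow> 'x \<Rightarrow> real) \<Rightarrow> ('x \<Rightarrow> 's \<Rightarrow> 'x) \<Rightarrow> bool" where
  "is_action p rs d act \<longleftrightarrow>
     (\<forall>x s t. act (act x s) t = act x (s * t)) \<and>
     (\<forall>x. \<forall>e\<in>idem. act x e = rs x e) \<and>
     (\<forall>x s. p (act x s) = minv s * p x * s) \<and>
     (\<forall>x y s. p x = p y \<longrightarrow> d (act x s) (act y s) \<le> d x y)"

definition proper_action ::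
  "('x \<Rightarrow> 's::monoid_mult) \<Rightarrow> ('x \<Rightarrow> 'x \<Rightarrow> real) \<Rightarrow> ('x \<Rightarrow> 's \<Rightarrow> 'x) \<Rightarrow> bool" where
  "proper_action p d act \<longleftrightarrow>
     (\<forall>y1 R. p y1 = 1 \<longrightarrow> R \<ge> 0 \<longrightarrow>
        (\<exists>C. finite C \<and>
           {s. edist p d (act y1 s) (act y1 (minv s * s)) \<le> ereal R}
             \<subseteq> {c * e | c e. c \<in> C \<and> e \<in> idem}))"

definition cobounded_action ::
  "('x \<Rightarrow> 's::monoid_mult) \<Rightarrow> ('x \<Rightarrow> 'x \<Rightarrow> real) \<Rightarrow> ('x \<Rightarrow> 's \<Rightarrow> 'x) \<Rightarrow> bool" where
  "cobounded_action p d act \<longleftrightarrow>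
     (\<exists>x1' T0. p x1' = 1 \<and> T0 \<ge> 0 \<and>
        (\<forall>z. \<exists>s y. edist p d x1' y \<le> ereal T0 \<and> z = act y s))"

definition SR_adj :: "('x \<Rightarrow> 's) \<Rightarrow> ('x \<Rightarrow> 'x \<Rightarrow> real) \<Rightarrow> ('x \<Rightarrow> 's \<Rightarrow> 'x) \<Rightarrow> 'x \<Rightarrow> real
    \<Rightarrow> 's \<Rightarrow> 's \<Rightarrow> bool" where
  "SR_adj p d act x1 R s t \<longleftrightarrow> s \<noteq> t \<and> edist p d (act x1 s) (act x1 t) \<le> ereal R"

definition SR_walk :: "('x \<Rightarrow> 's) \<Rightarrow> ('x \<Rightarrow> 'x \<Rightarrow> real) \<Rightarrow> ('x \<Rightarrow> 's \<Rightarrow> 'x) \<Rightarrow> 'x \<Rightarrow> real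
    \<Rightarrow> 's \<Rightarrow> 's \<Rightarrow> nat \<Rightarrow> bool" where
  "SR_walk p d act x1 R s t n \<longleftrightarrow>
     (\<exists>w::nat \<Rightarrow> 's. w 0 = s \<and> w n = t \<and> (\<forall>i<n. SR_adj p d act x1 R (w i) (w (Suc i))))"

definition SR_dist :: "('x \<Rightarrow> 's) \<Rightarrow> ('x \<Rightarrow> 'x \<Rightarrow> real) \<Rightarrow> ('x \<Rightarrow> 's \<Rightarrow> 'x) \<Rightarrow> 'x \<Rightarrow> real
    \<Rightarrow> 's \<Rightarrow> 's \<Rightarrow> ereal" where
  "SR_dist p d act x1 R s t =
     (if \<exists>n. SR_walk p d act x1 R s t n
      then ereal (real (LEAST n. SR_walk p d act x1 R s t n)) else \<infinity>)"

definition quasi_isometry :: "('a \<Rightarrow> 'a \<Rightarrow> ereal) \<Rightarrow> ('b \<Rightarrow> 'b \<Rightarrow> ereal) \<Rightarrow> ('a \<Rightarrow> 'b) \<Rightarrow> bool" where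
  "quasi_isometry dA dB f \<longleftrightarrow>
     (\<exists>L C::real. L \<ge> 1 \<and> C \<ge> 0 \<and>
       (\<forall>a a'. dA a a' < \<infinity> \<longleftrightarrow> dB (f a) (f a') < \<infinity>) \<and>
       (\<forall>a a'. dA a a' < \<infinity> \<longrightarrow>
          real_of_ereal (dA a a') / L - C \<le> real_of_ereal (dB (f a) (f a')) \<and>
          real_of_ereal (dB (f a) (f a')) \<le> L * real_of_ereal (dA a a') + C) \<and>
       (\<forall>b. \<exists>a. dB b (f a) \<le> ereal C))"

definition quasi_isometric :: "('a \<Rightarrow> 'a \<Rightarrow> ereal) \<Rightarrow> ('b \<Rightarrow> 'b \<Rightarrow> ereal) \<Rightarrow> bool" where
  "quasi_isometric dA dB \<longleftrightarrow> (\<exists>f. quasi_isometry dA dB f)"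

end

theory Submission
  imports Defs
begin

text \<open>The orbit map s \<mapsto> x1 \<cdot> s is the quasi-isometry. Coboundedness and the contraction
  property of the action make the orbit of x1 K-dense in X, since p(x1 \<cdot> s) = p(y \<cdot> s) for all
  y in the fibre over 1. Two orbit points in a common fibre are joined by a geodesic, which we cut
  into at most d + 1 pieces of length \<le> 1; replacing each cut point by a K-close orbit point gives
  a walk in S^R once R \<ge> 2K + 1, so d^R \<le> d + 1. Conversely each edge of S^R has length \<le> R in X,
  so d \<le> R d^R. Points in different fibres are at distance \<infinity> for both metrics.\<close>

lemma quasi_isometryI:
  fixes L C :: real
  assumes "1 \<le> L" "0 \<le> C"
    and "\<And>a a'. dA a a' < \<infinity> \<longleftrightarrow> dB (f a) (f a') < \<infinity>"
    and bounds: "\<And>a a'. dA a a' < \<infinity> \<Longrightarrow>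
        real_of_ereal (dB (f a) (f a')) \<le> L * real_of_ereal (dA a a') + C \<and>
        real_of_ereal (dA a a') \<le> L * real_of_ereal (dB (f a) (f a')) + C"
    and "\<And>b. \<exists>a. dB b (f a) \<le> ereal C"
  shows "quasi_isometry dA dB f"
  unfolding quasi_isometry_def
proof (rule exI[of _ L], rule exI[of _ C], intro conjI allI impI)
  fix a a'
  assume "dA a a' < \<infinity>"
  then have "real_of_ereal (dA a a') / L \<le> real_of_ereal (dB (f a) (f a')) + C / L"
    using bounds[of a a'] \<open>1 \<le> L\<close> by (simp add: divide_le_eq algebra_simps)
  moreover have "C / L \<le> C"
    using assms(1,2) by (simp add: divide_le_eq mult_le_cancel_left1)
  ultimately show "real_of_ereal (dA a a') / L - C \<le> real_of_ereal (dB (f a) (f a'))"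
    by linarith
qed (use assms in auto)

lemma edist_eq: "p x = p y \<Longrightarrow> edist p d x y = ereal (d x y)"
  by (simp add: edist_def)

lemma edist_finite_iff: "edist p d x y < \<infinity> \<longleftrightarrow> p x = p y"
  by (simp add: edist_def)

lemma edist_le_ereal_iff: "edist p d x y \<le> ereal r \<longleftrightarrow> p x = p y \<and> d x y \<le> r"
  by (simp add: edist_def)

locale fibred_metric =
  fixes p :: "'x \<Rightarrow> 's" and d :: "'x \<Rightarrow> 'x \<Rightarrow> real"
  assumes dist_self [simp]: "d x x = 0"
    and dist_commute: "p x = p y \<Longrightarrow> d x y = d y x"
    and dist_triangle: "p x = p y \<Longrightarrow> p y = p z \<Longrightarrow> d x z \<le> d x y + d y z"
begin

lemma zero_le_dist:
  assumes "p x = p y"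
  shows "0 \<le> d x y"
proof -
  have "d x x \<le> d x y + d y x"
    using assms by (intro dist_triangle) auto
  then show ?thesis
    using dist_commute[OF assms] by simp
qed

end

lemma global_presheaf_metric_imp_fibred_metric:
  assumes "global_presheaf_metric p rs d"
  shows "fibred_metric p d"
proof
  fix x y z
  from assms show "d x x = 0"
    unfolding global_presheaf_metric_def by blast
  from assms show "p x = p y \<Longrightarrow> d x y = d y x"
    unfolding global_presheaf_metric_def by blast
  from assms show "p x = p y \<Longrightarrow> p y = p z \<Longrightarrow> d x z \<le> d x y + d y z"
    unfolding global_presheaf_metric_def by blast
qed

definition orbit_dense :: "('x \<Rightarrow> 's) \<Rightarrow> ('x \<Rightarrow> 'x \<Rightarrow> real) \<Rightarrow> ('x \<Rightarrow> 's \<Rightarrow> 'x) \<Rightarrow> 'x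
    \<Rightarrow> real \<Rightarrow> bool" where
  "orbit_dense p d act x1 K \<longleftrightarrow> (\<forall>z. \<exists>s. p (act x1 s) = p z \<and> d (act x1 s) z \<le> K)"

lemma cobounded_orbit_dense:
  assumes "fibred_metric p d" and act: "is_action p rs d act"
    and "cobounded_action p d act" and x1: "p x1 = 1"
  obtains K where "orbit_dense p d act x1 K"
proof -
  interpret fibred_metric p d by fact
  from assms(3) obtain x1' T0 where x1': "p x1' = 1"
    and cob: "\<And>z. \<exists>s y. edist p d x1' y \<le> ereal T0 \<and> z = act y s"
    unfolding cobounded_action_def by blast
  from act have p_act: "\<And>x s. p (act x s) = minv s * p x * s"
    and contract: "\<And>x y s. p x = p y \<Longrightarrow> d (act x s) (act y s) \<le> d x y"
    unfolding is_action_def by blast+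
  have "\<exists>s. p (act x1 s) = p z \<and> d (act x1 s) z \<le> d x1 x1' + T0" for z
  proof -
    obtain s y where y: "p y = 1" "d x1' y \<le> T0" and z: "z = act y s"
      using cob[of z] x1' by (auto simp: edist_le_ereal_iff)
    have "p (act x1 s) = p z"
      using z y x1 by (simp add: p_act)
    moreover have "d (act x1 s) z \<le> d x1 x1' + d x1' y"
      using contract[of x1 y s] dist_triangle[of x1 x1' y] x1 x1' y z by simp
    ultimately show ?thesis
      using y(2) by (intro exI[of _ s]) simp
  qed
  then show thesis
    using that unfolding orbit_dense_def by blast
qed

text \<open>Repeated vertices are skipped, because adjacency in S^R requires distinct vertices.\<close>

lemma SR_walk_of_steps:
  assumes "\<And>i. i < n \<Longrightarrow> edist p d (act x1 (w i)) (act x1 (w (Suc i))) \<le> ereal R"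
  shows "\<exists>m\<le>n. SR_walk p d act x1 R (w 0) (w n) m"
  using assms
proof (induction n arbitrary: w)
  case 0
  show ?case unfolding SR_walk_def by auto
next
  case (Suc n)
  have "\<exists>m\<le>n. SR_walk p d act x1 R (w 1) (w (Suc n)) m"
    using Suc.IH[of "\<lambda>i. w (Suc i)"] Suc.prems by auto
  then obtain m u where m: "m \<le> n" "u 0 = w 1" "u m = w (Suc n)"
      and u: "\<forall>i<m. SR_adj p d act x1 R (u i) (u (Suc i))"
    unfolding SR_walk_def by auto
  show ?case
  proof (cases "w 0 = w 1")
    case True
    then show ?thesis
      using m u unfolding SR_walk_def by (intro exI[of _ m]) auto
  next
    case False
    then have "SR_adj p d act x1 R (w 0) (u 0)"
      using Suc.prems[of 0] m(2) by (simp add: SR_adj_def)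
    then have "\<forall>i<Suc m. SR_adj p d act x1 R (case i of 0 \<Rightarrow> w 0 | Suc j \<Rightarrow> u j)
        (u i)"
      using u by (auto split: nat.split)
    then have "SR_walk p d act x1 R (w 0) (w (Suc n)) (Suc m)"
      unfolding SR_walk_def using m(3)
      by (intro exI[of _ "\<lambda>i. case i of 0 \<Rightarrow> w 0 | Suc j \<Rightarrow> u j"]) auto
    then show ?thesis using m(1) by auto
  qed
qed

context fibred_metric
begin

lemma SR_walk_imp_dist_le:
  assumes "SR_walk p d act x1 R s t n"
  shows "p (act x1 s) = p (act x1 t) \<and> d (act x1 s) (act x1 t) \<le> R * real n"
proof -
  obtain w where w: "w 0 = s" "w n = t" and adj: "\<forall>i<n. SR_adj p d act x1 R (w i) (w (Suc i))"
    using assms unfolding SR_walk_def by blast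
  have "p (act x1 s) = p (act x1 (w k)) \<and> d (act x1 s) (act x1 (w k)) \<le> R * real k"
    if "k \<le> n" for k
    using that
  proof (induction k)
    case 0
    then show ?case using w(1) by simp
  next
    case (Suc k)
    have "p (act x1 (w k)) = p (act x1 (w (Suc k)))"
      and "d (act x1 (w k)) (act x1 (w (Suc k))) \<le> R"
      using adj Suc.prems by (auto simp: SR_adj_def edist_le_ereal_iff)
    then show ?case
      using Suc dist_triangle[of "act x1 s" "act x1 (w k)" "act x1 (w (Suc k))"]
      by (auto simp: algebra_simps)
  qed
  then show ?thesis using w(2) by blast
qed

lemma geodesic_unit_chain:
  assumes "geodesic_fibres p d" "p x = p y"
  obtains N g where "1 \<le> N" "real N \<le> d x y + 1" "g 0 = x" "g N = y"
    "\<And>i. p (g i) = p x" "\<And>i. d (g i) (g (Suc i)) \<le> 1"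
proof -
  let ?D = "d x y"
  obtain \<gamma> where \<gamma>: "\<gamma> 0 = x" "\<gamma> ?D = y" "\<forall>t\<in>{0..?D}. p (\<gamma> t) = p x"
      "\<forall>a\<in>{0..?D}. \<forall>b\<in>{0..?D}. d (\<gamma> a) (\<gamma> b) = \<bar>a - b\<bar>"
    using assms unfolding geodesic_fibres_def by blast
  have D: "0 \<le> ?D"
    using zero_le_dist assms(2) .
  define N where "N = max 1 (nat \<lceil>?D\<rceil>)"
  have real_N: "real N = max 1 (of_int \<lceil>?D\<rceil>)"
    unfolding N_def using D by (simp add: of_nat_max)
  have N: "1 \<le> N" "real N \<le> ?D + 1" "?D \<le> real N"
    unfolding real_N using D ceiling_correct[of ?D] by (simp_all add: N_def le_max_iff_disj)
  show thesis
  proof (rule that[of N "\<lambda>i. \<gamma> (min (real i) ?D)"])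
    fix i
    show "d (\<gamma> (min (real i) ?D)) (\<gamma> (min (real (Suc i)) ?D)) \<le> 1"
      using \<gamma>(4) D by (simp add: abs_if min_def)
  qed (use N \<gamma> D in \<open>auto simp: min_def\<close>)
qed

lemma orbit_dense_nonneg: "orbit_dense p d act x1 K \<Longrightarrow> 0 \<le> K"
  unfolding orbit_dense_def using zero_le_dist by (meson order_trans)

lemma SR_walk_shadowing_chain:
  assumes near: "orbit_dense p d act x1 K"
    and R: "2 * K + 1 \<le> R"
    and g: "g 0 = act x1 s" "g N = act x1 t" "\<And>i. p (g i) = p (g 0)"
      "\<And>i. d (g i) (g (Suc i)) \<le> 1"
    and "1 \<le> N"
  shows "\<exists>m\<le>N. SR_walk p d act x1 R s t m"
proof -
  obtain c where c: "\<And>z. p (act x1 (c z)) = p z \<and> d (act x1 (c z)) z \<le> K"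
    using near unfolding orbit_dense_def by metis
  have K: "0 \<le> K"
    using orbit_dense_nonneg[OF near] .
  define w where "w i = (if i = 0 then s else if i = N then t else c (g i))" for i
  have w0: "w 0 = s" and wN: "w N = t"
    using \<open>1 \<le> N\<close> by (auto simp: w_def)
  have shadow: "p (act x1 (w i)) = p (g 0) \<and> d (act x1 (w i)) (g i) \<le> K" if "i \<le> N" for i
    using c[of "g i"] g K g(3)[of N, unfolded g(1,2)] by (auto simp: w_def)
  have "edist p d (act x1 (w i)) (act x1 (w (Suc i))) \<le> ereal R" if "i < N" for i
  proof -
    let ?a = "act x1 (w i)" and ?b = "act x1 (w (Suc i))"
    have fib: "p ?a = p (g 0)" "p ?b = p (g 0)"
      using shadow that by auto
    have "d ?a ?b \<le> d ?a (g i) + d (g i) (g (Suc i)) + d (g (Suc i)) ?b"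
      using dist_triangle[of ?a "g i" ?b] dist_triangle[of "g i" "g (Suc i)" ?b] fib g(3)
      by (simp add: g(3)[of i])
    also have "\<dots> \<le> K + 1 + K"
      using shadow[of i] shadow[of "Suc i"] g(4)[of i] dist_commute[of "g (Suc i)" ?b] fib g(3)
        that by (simp add: g(3)[of "Suc i"])
    finally show ?thesis
      using fib R by (simp add: edist_le_ereal_iff)
  qed
  then show ?thesis
    using SR_walk_of_steps[of N p d act x1 w R] w0 wN by auto
qed

lemma SR_walk_short:
  assumes "geodesic_fibres p d" "orbit_dense p d act x1 K" "2 * K + 1 \<le> R"
    and fib: "p (act x1 s) = p (act x1 t)"
  shows "\<exists>m. real m \<le> d (act x1 s) (act x1 t) + 1 \<and> SR_walk p d act x1 R s t m"
proof -
  obtain N g where N: "1 \<le> N" "real N \<le> d (act x1 s) (act x1 t) + 1"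
    and g: "g 0 = act x1 s" "g N = act x1 t" "\<And>i. p (g i) = p (act x1 s)"
      "\<And>i. d (g i) (g (Suc i)) \<le> 1"
    using geodesic_unit_chain[OF assms(1) fib] by blast
  obtain m where "m \<le> N" "SR_walk p d act x1 R s t m"
    using SR_walk_shadowing_chain[OF assms(2,3) g(1,2) _ g(4) N(1)] g(1,3) by metis
  then show ?thesis
    using N(2) by (intro exI[of _ m]) auto
qed

lemma SR_dist_finite_iff:
  assumes "geodesic_fibres p d" "orbit_dense p d act x1 K" "2 * K + 1 \<le> R"
  shows "SR_dist p d act x1 R s t < \<infinity> \<longleftrightarrow> p (act x1 s) = p (act x1 t)"
proof
  assume "SR_dist p d act x1 R s t < \<infinity>"
  then obtain n where "SR_walk p d act x1 R s t n"
    unfolding SR_dist_def by (auto split: if_splits)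
  then show "p (act x1 s) = p (act x1 t)"
    using SR_walk_imp_dist_le by blast
next
  assume "p (act x1 s) = p (act x1 t)"
  then obtain m where "SR_walk p d act x1 R s t m"
    using SR_walk_short[OF assms] by blast
  then show "SR_dist p d act x1 R s t < \<infinity>"
    unfolding SR_dist_def by auto
qed

lemma SR_dist_bounds:
  assumes "geodesic_fibres p d" "orbit_dense p d act x1 K" "2 * K + 1 \<le> R"
    and "p (act x1 s) = p (act x1 t)"
  obtains n where "SR_dist p d act x1 R s t = ereal (real n)"
    "d (act x1 s) (act x1 t) \<le> R * real n" "real n \<le> d (act x1 s) (act x1 t) + 1"
proof
  let ?walk = "SR_walk p d act x1 R s t"
  obtain m where m: "real m \<le> d (act x1 s) (act x1 t) + 1" "?walk m"
    using SR_walk_short[OF assms] by blast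
  then show "SR_dist p d act x1 R s t = ereal (real (LEAST n. ?walk n))"
    by (auto simp: SR_dist_def)
  show "d (act x1 s) (act x1 t) \<le> R * real (LEAST n. ?walk n)"
    using SR_walk_imp_dist_le LeastI[of ?walk, OF m(2)] by blast
  have "(LEAST n. ?walk n) \<le> m"
    using m(2) by (rule Least_le)
  then show "real (LEAST n. ?walk n) \<le> d (act x1 s) (act x1 t) + 1"
    using m(1) by linarith
qed

lemma quasi_isometry_orbit_map:
  assumes geo: "geodesic_fibres p d" and near: "orbit_dense p d act x1 K"
    and R: "2 * K + 1 \<le> R"
  shows "quasi_isometry (SR_dist p d act x1 R) (edist p d) (act x1)"
proof (rule quasi_isometryI[where L = "R + 1" and C = "max 1 K"])
  show "1 \<le> R + 1"
    using R orbit_dense_nonneg[OF near] by simp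
  show "0 \<le> max 1 K"
    by simp
  fix s t
  show "SR_dist p d act x1 R s t < \<infinity> \<longleftrightarrow> edist p d (act x1 s) (act x1 t) < \<infinity>"
    unfolding edist_finite_iff by (rule SR_dist_finite_iff[OF assms])
next
  fix s t
  assume "SR_dist p d act x1 R s t < \<infinity>"
  then have fib: "p (act x1 s) = p (act x1 t)"
    using SR_dist_finite_iff[OF assms] by blast
  let ?D = "d (act x1 s) (act x1 t)"
  obtain n where n: "SR_dist p d act x1 R s t = ereal (real n)" "?D \<le> R * real n"
      "real n \<le> ?D + 1"
    using SR_dist_bounds[OF assms fib] by blast
  have "edist p d (act x1 s) (act x1 t) = ereal ?D"
    using fib by (rule edist_eq)
  moreover have "?D \<le> (R + 1) * real n + max 1 K"
    using n(2) by (simp add: algebra_simps)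
  moreover have "R * ?D \<ge> 0"
    using zero_le_dist[OF fib] R orbit_dense_nonneg[OF near] by simp
  then have "real n \<le> (R + 1) * ?D + max 1 K"
    using n(3) by (simp add: algebra_simps)
  ultimately show "real_of_ereal (edist p d (act x1 s) (act x1 t))
      \<le> (R + 1) * real_of_ereal (SR_dist p d act x1 R s t) + max 1 K \<and>
    real_of_ereal (SR_dist p d act x1 R s t)
      \<le> (R + 1) * real_of_ereal (edist p d (act x1 s) (act x1 t)) + max 1 K"
    using n(1) by simp
next
  fix z
  obtain s where "p (act x1 s) = p z" "d (act x1 s) z \<le> K"
    using near unfolding orbit_dense_def by blast
  then have "p z = p (act x1 s) \<and> d z (act x1 s) \<le> max 1 K"
    using dist_commute[of "act x1 s" z] by simp
  then show "\<exists>s. edist p d z (act x1 s) \<le> ereal (max 1 K)"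
    unfolding edist_le_ereal_iff by blast
qed

end

theorem lemma3p9:
  fixes p :: "'x \<Rightarrow> 's::monoid_mult"
    and rs act :: "'x \<Rightarrow> 's \<Rightarrow> 'x"
    and d :: "'x \<Rightarrow> 'x \<Rightarrow> real"
    and x1 :: 'x
  assumes "inverse_monoid TYPE('s)"
    and "global_presheaf_metric p rs d"
    and "geodesic_fibres p d"
    and "is_action p rs d act"
    and "proper_action p d act"
    and "cobounded_action p d act"
    and "p x1 = 1"
  shows "\<exists>T\<ge>0. \<forall>R\<ge>T. quasi_isometric (SR_dist p d act x1 R) (edist p d)"
proof -
  have metric: "fibred_metric p d"
    using assms(2) by (rule global_presheaf_metric_imp_fibred_metric)
  obtain K where dense: "orbit_dense p d act x1 K"
    using cobounded_orbit_dense[OF metric assms(4,6,7)] by blast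
  have "quasi_isometric (SR_dist p d act x1 R) (edist p d)" if "2 * K + 1 \<le> R" for R
    using fibred_metric.quasi_isometry_orbit_map[OF metric assms(3) dense that]
    unfolding quasi_isometric_def by blast
  moreover have "0 \<le> 2 * K + 1"
    using fibred_metric.orbit_dense_nonneg[OF metric dense] by simp
  ultimately show ?thesis
    by blast
qed

end
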